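(* Let $t\in[0,T]$. (a) For every $X\in\mathbb{L}^\infty(\mathbb{R}_-,\mathcal{F}_T)$ there exists a unique $Z_t\in\mathbb{L}^\infty(\mathbb{R}_-,\mathcal{F}_t)$ such that $\operatorname{ess\,inf}_{\mathcal{F}_0}(Z_t1_{F_t})=\operatorname{ess\,inf}_{\mathcal{F}_0}(X1_{F_t})$ for all $F_t\in\mathcal{F}_t$. (b) For every $X\in\mathbb{L}^\infty(\mathbb{R},\mathcal{F}_T)$ with $X<0$ a.s. there exists a unique $Z_t\in\mathbb{L}^0(\mathbb{R}_-,\mathcal{F}_t)$ bounded from below such that $\operatorname{ess\,inf}_{\mathcal{F}_0}(Z_t1_{F_t})=\operatorname{ess\,inf}_{\mathcal{F}_0}(X1_{F_t})$ for all $F_t\in\mathcal{F}_t$.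
   Context: Let $(\Omega,\mathcal{F},\mathbb{P})$ be a complete probability space and $(\mathcal{F}_t)_{t\in[0,T]}$ a filtration of complete sub-$\sigma$-algebras of $\mathcal{F}$ ($\mathcal{F}_s\subseteq\mathcal{F}_t$ for $s\le t$). $\mathbb{L}^0(G,\mathcal{G})$ denotes the $\mathcal{G}$-measurable random variables a.s. valued in $G$ and $\mathbb{L}^\infty(G,\mathcal{G})$ the essentially bounded ones; $\mathbb{R}_-=(-\infty,0]$. For a sub-$\sigma$-algebra $\mathcal{G}$, $\operatorname{ess\,sup}_{\mathcal{G}}(Y)$ is the smallest (a.s.) $\mathcal{G}$-measurable $\overline{\mathbb{R}}$-valued random variable dominating $Y$ a.s., and $\operatorname{ess\,inf}_{\mathcal{G}}(Y)=-\operatorname{ess\,sup}_{\mathcal{G}}(-Y)$ is the largest $\mathcal{G}$-measurable random variable dominated by $Y$ a.s. *)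

theory Defs
  imports "HOL-Probability.Probability"
begin

definition complete_subalgebra :: "'a measure \<Rightarrow> 'a measure \<Rightarrow> bool" where
  "complete_subalgebra M G \<longleftrightarrow> subalgebra M G \<and> null_sets M \<subseteq> sets G"

definition is_cond_ess_sup :: "'a measure \<Rightarrow> 'a measure \<Rightarrow> ('a \<Rightarrow> real) \<Rightarrow> ('a \<Rightarrow> ereal) \<Rightarrow> bool" where
  "is_cond_ess_sup M G Y S \<longleftrightarrow>
     S \<in> borel_measurable G \<and> (AE x in M. ereal (Y x) \<le> S x) \<and>
     (\<forall>S' \<in> borel_measurable G. (AE x in M. ereal (Y x) \<le> S' x) \<longrightarrow> (AE x in M. S x \<le> S' x))"

definition cond_ess_sup :: "'a measure \<Rightarrow> 'a measure \<Rightarrow> ('a \<Rightarrow> real) \<Rightarrow> ('a \<Rightarrow> ereal)" where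
  "cond_ess_sup M G Y = (SOME S. is_cond_ess_sup M G Y S)"

definition cond_ess_inf :: "'a measure \<Rightarrow> 'a measure \<Rightarrow> ('a \<Rightarrow> real) \<Rightarrow> ('a \<Rightarrow> ereal)" where
  "cond_ess_inf M G Y = (\<lambda>x. - cond_ess_sup M G (\<lambda>y. - Y y) x)"

definition Linf_nonpos :: "'a measure \<Rightarrow> 'a measure \<Rightarrow> ('a \<Rightarrow> real) \<Rightarrow> bool" where
  "Linf_nonpos M G Z \<longleftrightarrow> Z \<in> borel_measurable G \<and> (AE x in M. Z x \<le> 0) \<and>
     (\<exists>C. AE x in M. \<bar>Z x\<bar> \<le> C)"

end

theory Submission imports Defs begin

text \<open>With \<open>G = F 0 \<subseteq> H = F t\<close>, the solution is the conditional essential infimum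
  \<open>Z = ess inf\<^sub>H X\<close>. For \<open>A \<in> H\<close>, a \<open>G\<close>-measurable lower bound \<open>I\<close> of \<open>X 1\<^sub>A\<close>, patched with
  \<open>Z\<close> off \<open>A\<close>, is an \<open>H\<close>-measurable lower bound of \<open>X\<close> and hence lies below \<open>Z\<close>; so \<open>Z 1\<^sub>A\<close> and
  \<open>X 1\<^sub>A\<close> have the same \<open>G\<close>-measurable lower bounds and thus the same \<open>ess inf\<^sub>G\<close>.
  For uniqueness, if \<open>Z' < r \<le> Z\<close> on a non-null set \<open>A \<in> H\<close> with \<open>r \<le> 0\<close>, then the constant \<open>r\<close>
  is below \<open>Z 1\<^sub>A\<close> but not below \<open>Z' 1\<^sub>A\<close>; countably many rational \<open>r\<close> suffice.
  Conditional essential suprema exist because \<open>E[arctan S]\<close> attains its infimum over the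
  \<open>G\<close>-measurable majorants \<open>S\<close>, at the pointwise infimum of a minimising sequence.\<close>

text \<open>An order embedding of the extended reals into a bounded interval, so that integrals of
  \<open>earctan \<circ> S\<close> exist and are strictly monotone in \<open>S\<close> up to null sets.\<close>
definition earctan :: "ereal \<Rightarrow> real" where
  "earctan e = (case e of ereal r \<Rightarrow> arctan r | PInfty \<Rightarrow> pi / 2 | MInfty \<Rightarrow> - (pi / 2))"

lemma strict_mono_earctan: "strict_mono earctan"
proof (rule strict_monoI)
  fix a b :: ereal assume "a < b"
  then show "earctan a < earctan b"
    using arctan_bounded[of "real_of_ereal a"] arctan_bounded[of "real_of_ereal b"]
    by (cases a; cases b) (auto simp: earctan_def arctan_less_iff)
qed

lemma abs_earctan_le: "\<bar>earctan e\<bar> \<le> pi / 2"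
  using arctan_bounded[of "real_of_ereal e"] by (cases e) (auto simp: earctan_def abs_le_iff)

lemma borel_measurable_earctan:
  assumes "f \<in> borel_measurable M"
  shows "(\<lambda>x. earctan (f x)) \<in> borel_measurable M"
  by (rule borel_measurable_ereal_cases[OF assms]) (use assms in \<open>simp add: earctan_def\<close>)

lemma integrable_earctan:
  assumes "finite_measure M" and "f \<in> borel_measurable M"
  shows "integrable M (\<lambda>x. earctan (f x))"
  using abs_earctan_le assms
  by (intro finite_measure.integrable_const_bound[where B = "pi / 2"] borel_measurable_earctan) auto

lemma AE_eq_if_integral_earctan_le:
  assumes M: "finite_measure M"
    and f: "f \<in> borel_measurable M" and g: "g \<in> borel_measurable M"
    and le: "\<And>x. f x \<le> g x"
    and int_le: "(\<integral>x. earctan (g x) \<partial>M) \<le> (\<integral>x. earctan (f x) \<partial>M)"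
  shows "AE x in M. g x = f x"
proof -
  have int_f: "integrable M (\<lambda>x. earctan (f x))" and int_g: "integrable M (\<lambda>x. earctan (g x))"
    using integrable_earctan[OF M] f g by auto
  have nonneg: "AE x in M. 0 \<le> earctan (g x) - earctan (f x)"
    using strict_mono_less_eq[OF strict_mono_earctan] le by simp
  have "(\<integral>x. earctan (g x) - earctan (f x) \<partial>M) = 0"
    using int_le integral_nonneg_AE[OF nonneg] Bochner_Integration.integral_diff[OF int_g int_f]
    by linarith
  then have "AE x in M. earctan (g x) - earctan (f x) = 0"
    using integral_nonneg_eq_0_iff_AE[OF Bochner_Integration.integrable_diff[OF int_g int_f] nonneg]
    by simp
  then show ?thesis
    by eventually_elim (use strict_mono_eq[OF strict_mono_earctan] in simp)
qed

lemma cond_ess_sup_exists: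
  assumes M: "finite_measure M" and G: "subalgebra M G"
  shows "\<exists>S. is_cond_ess_sup M G Y S"
proof -
  define SS where "SS = {S \<in> borel_measurable G. AE x in M. ereal (Y x) \<le> S x}"
  define f where "f S = (\<integral>x. earctan (S x) \<partial>M)" for S :: "'a \<Rightarrow> ereal"
  have f_mono: "f S \<le> f S'"
    if "S \<in> borel_measurable G" "S' \<in> borel_measurable G" "\<And>x. S x \<le> S' x" for S S'
    unfolding f_def using that measurable_from_subalg[OF G] integrable_earctan[OF M]
    by (intro integral_mono) (auto simp: strict_mono_less_eq[OF strict_mono_earctan])
  define m where "m = Inf (f ` SS)"
  have "(\<lambda>_. \<infinity>) \<in> SS" by (simp add: SS_def)
  moreover have bdd: "bdd_below (f ` SS)"
    using f_mono[of "\<lambda>_. -\<infinity>"] unfolding SS_def bdd_below_def by auto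
  ultimately have "\<exists>S\<in>SS. f S < m + 1 / Suc n" for n
    using cInf_lessD[of "f ` SS" "m + 1 / Suc n"] unfolding m_def by auto
  then obtain Sn where Sn: "\<And>n. Sn n \<in> SS" and f_Sn: "\<And>n. f (Sn n) < m + 1 / Suc n"
    by metis
  define S where "S x = (INF n. Sn n x)" for x
  have Sn_meas: "Sn n \<in> borel_measurable G" for n
    using Sn by (simp add: SS_def)
  then have S_meas: "S \<in> borel_measurable G"
    unfolding S_def by measurable
  have "AE x in M. \<forall>n. ereal (Y x) \<le> Sn n x"
    using Sn by (simp add: SS_def AE_all_countable)
  then have S_ge: "AE x in M. ereal (Y x) \<le> S x"
    by eventually_elim (simp add: S_def le_INF_iff)
  have f_S_approx: "f S < m + 1 / Suc n" for n
    using f_mono[OF S_meas Sn_meas, of n] f_Sn[of n] unfolding S_def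
    by (meson INF_lower UNIV_I le_less_trans)
  have f_S: "f S \<le> m"
  proof (rule ccontr)
    assume "\<not> f S \<le> m"
    then obtain n where "1 / Suc n < f S - m"
      by (metis diff_gt_0_iff_gt nat_approx_posE not_le)
    with f_S_approx[of n] show False by linarith
  qed
  have "AE x in M. S x \<le> S' x"
    if S': "S' \<in> borel_measurable G" "AE x in M. ereal (Y x) \<le> S' x" for S'
  proof -
    have min_meas: "(\<lambda>x. min (S x) (S' x)) \<in> borel_measurable G"
      using S_meas S' by measurable
    with S_ge S' have "(\<lambda>x. min (S x) (S' x)) \<in> SS"
      by (auto simp: SS_def)
    then have "f S \<le> f (\<lambda>x. min (S x) (S' x))"
      using f_S cInf_lower[OF _ bdd] unfolding m_def by fastforce
    then have "AE x in M. S x = min (S x) (S' x)"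
      using measurable_from_subalg[OF G] S_meas min_meas
      by (intro AE_eq_if_integral_earctan_le[OF M]) (auto simp: f_def)
    then show ?thesis
      by eventually_elim (metis min.absorb_iff1)
  qed
  with S_meas S_ge show ?thesis
    unfolding is_cond_ess_sup_def by blast
qed

definition is_cond_ess_inf :: "'a measure \<Rightarrow> 'a measure \<Rightarrow> ('a \<Rightarrow> real) \<Rightarrow> ('a \<Rightarrow> ereal) \<Rightarrow> bool" where
  "is_cond_ess_inf M G Y I \<longleftrightarrow>
     I \<in> borel_measurable G \<and> (AE x in M. I x \<le> ereal (Y x)) \<and>
     (\<forall>I' \<in> borel_measurable G. (AE x in M. I' x \<le> ereal (Y x)) \<longrightarrow> (AE x in M. I' x \<le> I x))"

lemma is_cond_ess_inf_iff_is_cond_ess_sup_uminus: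
  "is_cond_ess_inf M G Y I \<longleftrightarrow> is_cond_ess_sup M G (\<lambda>x. - Y x) (\<lambda>x. - I x)"
proof -
  have neg_le: "ereal (- y) \<le> - e \<longleftrightarrow> e \<le> ereal y" for y and e :: ereal
    by (metis ereal_minus_le_minus uminus_ereal.simps(1))
  have "(\<forall>I' \<in> borel_measurable G. (AE x in M. I' x \<le> ereal (Y x)) \<longrightarrow> (AE x in M. I' x \<le> I x)) \<longleftrightarrow>
    (\<forall>S \<in> borel_measurable G. (AE x in M. ereal (- Y x) \<le> S x) \<longrightarrow> (AE x in M. - I x \<le> S x))"
  proof (intro iffI ballI impI)
    fix S :: "'a \<Rightarrow> ereal"
    assume "\<forall>I' \<in> borel_measurable G. (AE x in M. I' x \<le> ereal (Y x)) \<longrightarrow> (AE x in M. I' x \<le> I x)"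
      and "S \<in> borel_measurable G" and "AE x in M. ereal (- Y x) \<le> S x"
    then show "AE x in M. - I x \<le> S x"
      by (metis (mono_tags, lifting) AE_cong borel_measurable_uminus_eq_ereal ereal_minus_le_minus
          ereal_uminus_uminus neg_le)
  next
    fix I' :: "'a \<Rightarrow> ereal"
    assume "\<forall>S \<in> borel_measurable G. (AE x in M. ereal (- Y x) \<le> S x) \<longrightarrow> (AE x in M. - I x \<le> S x)"
      and "I' \<in> borel_measurable G" and "AE x in M. I' x \<le> ereal (Y x)"
    then show "AE x in M. I' x \<le> I x"
      by (metis (mono_tags, lifting) AE_cong borel_measurable_uminus_eq_ereal ereal_minus_le_minus neg_le)
  qed
  then show ?thesis
    unfolding is_cond_ess_inf_def is_cond_ess_sup_def by (simp add: neg_le)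
qed

lemma is_cond_ess_inf_cond_ess_inf:
  assumes "finite_measure M" and "subalgebra M G"
  shows "is_cond_ess_inf M G Y (cond_ess_inf M G Y)"
  unfolding is_cond_ess_inf_iff_is_cond_ess_sup_uminus cond_ess_inf_def cond_ess_sup_def
  using cond_ess_sup_exists[OF assms] by (simp add: someI_ex)

lemma cond_ess_inf_cong:
  assumes "\<And>I. I \<in> borel_measurable G \<Longrightarrow>
     (AE x in M. I x \<le> ereal (Y1 x)) \<longleftrightarrow> (AE x in M. I x \<le> ereal (Y2 x))"
  shows "cond_ess_inf M G Y1 = cond_ess_inf M G Y2"
proof -
  have eq: "is_cond_ess_inf M G Y1 I = is_cond_ess_inf M G Y2 I" for I
    unfolding is_cond_ess_inf_def using assms by blast
  have "is_cond_ess_sup M G (\<lambda>x. - Y1 x) = is_cond_ess_sup M G (\<lambda>x. - Y2 x)"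
  proof
    fix S
    show "is_cond_ess_sup M G (\<lambda>x. - Y1 x) S = is_cond_ess_sup M G (\<lambda>x. - Y2 x) S"
      using eq[of "\<lambda>x. - S x"] unfolding is_cond_ess_inf_iff_is_cond_ess_sup_uminus by simp
  qed
  then show ?thesis
    unfolding cond_ess_inf_def cond_ess_sup_def by simp
qed

lemma is_cond_ess_inf_AE_cong:
  assumes "is_cond_ess_inf M G Y I" and "I' \<in> borel_measurable G" and "AE x in M. I x = I' x"
  shows "is_cond_ess_inf M G Y I'"
  unfolding is_cond_ess_inf_def
proof (intro conjI ballI impI)
  show "I' \<in> borel_measurable G" by fact
  show "AE x in M. I' x \<le> ereal (Y x)"
    using assms(1,3) unfolding is_cond_ess_inf_def by (auto elim: AE_mp)
  fix J assume "J \<in> borel_measurable G" and "AE x in M. J x \<le> ereal (Y x)"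
  then have "AE x in M. J x \<le> I x"
    using assms(1) unfolding is_cond_ess_inf_def by blast
  with assms(3) show "AE x in M. J x \<le> I' x"
    by eventually_elim simp
qed

lemma cond_ess_inf_indicator_tower:
  assumes G: "subalgebra M G" and H: "subalgebra M H" and GH: "sets G \<subseteq> sets H"
    and Z: "is_cond_ess_inf M H X (\<lambda>x. ereal (Z x))" and A: "A \<in> sets H"
  shows "cond_ess_inf M G (\<lambda>y. Z y * indicator A y) = cond_ess_inf M G (\<lambda>y. X y * indicator A y)"
proof (rule cond_ess_inf_cong)
  have Z_meas: "Z \<in> borel_measurable H" and Z_le: "AE x in M. Z x \<le> X x"
    and Z_greatest: "\<And>V. V \<in> borel_measurable H \<Longrightarrow> AE x in M. V x \<le> ereal (X x) \<Longrightarrow>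
      AE x in M. V x \<le> ereal (Z x)"
    using Z by (auto simp: is_cond_ess_inf_def)
  fix I :: "'a \<Rightarrow> ereal" assume I: "I \<in> borel_measurable G"
  show "(AE x in M. I x \<le> ereal (Z x * indicator A x)) \<longleftrightarrow>
    (AE x in M. I x \<le> ereal (X x * indicator A x))"
  proof
    assume "AE x in M. I x \<le> ereal (Z x * indicator A x)"
    with Z_le show "AE x in M. I x \<le> ereal (X x * indicator A x)"
      by eventually_elim (auto simp: indicator_def intro: order_trans)
  next
    assume I_le: "AE x in M. I x \<le> ereal (X x * indicator A x)"
    define V where "V x = (if x \<in> A then I x else ereal (Z x))" for x
    have "subalgebra H G"
      using G H GH by (simp add: subalgebra_def)
    then have "V \<in> borel_measurable H"
      unfolding V_def using measurable_from_subalg[OF _ I] Z_meas A by measurable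
    moreover have "AE x in M. V x \<le> ereal (X x)"
      using I_le Z_le by eventually_elim (auto simp: V_def indicator_def)
    ultimately have "AE x in M. V x \<le> ereal (Z x)"
      by (rule Z_greatest)
    with I_le show "AE x in M. I x \<le> ereal (Z x * indicator A x)"
      by eventually_elim (auto simp: V_def indicator_def split: if_splits)
  qed
qed

lemma ex_bounded_is_cond_ess_inf:
  assumes M: "finite_measure M" and H: "subalgebra M H"
    and X: "AE x in M. a \<le> X x \<and> X x \<le> b"
  shows "\<exists>Z. is_cond_ess_inf M H X (\<lambda>x. ereal (Z x)) \<and> (AE x in M. a \<le> Z x \<and> Z x \<le> b)"
proof -
  define I where "I = cond_ess_inf M H X"
  have I: "is_cond_ess_inf M H X I"
    unfolding I_def using M H by (rule is_cond_ess_inf_cond_ess_inf)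
  then have "AE x in M. ereal a \<le> I x"
    using X unfolding is_cond_ess_inf_def by (auto elim: AE_mp)
  moreover have "AE x in M. I x \<le> ereal (X x)"
    using I unfolding is_cond_ess_inf_def by blast
  ultimately have I_real: "AE x in M. I x = ereal (real_of_ereal (I x)) \<and>
      a \<le> real_of_ereal (I x) \<and> real_of_ereal (I x) \<le> b"
    using X
  proof eventually_elim
    case (elim x)
    then show ?case by (cases "I x") auto
  qed
  have "is_cond_ess_inf M H X (\<lambda>x. ereal (real_of_ereal (I x)))"
    using I by (rule is_cond_ess_inf_AE_cong)
      (use I I_real in \<open>auto simp: is_cond_ess_inf_def elim: AE_mp\<close>)
  with I_real show ?thesis
    by (auto elim: AE_mp)
qed

lemma AE_le_if_cond_ess_inf_indicator_eq:
  assumes M: "finite_measure M" and G: "subalgebra M G" and H: "subalgebra M H"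
    and Z: "Z \<in> borel_measurable H" and Z': "Z' \<in> borel_measurable H"
    and Z_nonpos: "AE x in M. Z x \<le> 0"
    and eq: "\<And>A. A \<in> sets H \<Longrightarrow> AE x in M.
      cond_ess_inf M G (\<lambda>y. Z y * indicator A y) x = cond_ess_inf M G (\<lambda>y. Z' y * indicator A y) x"
  shows "AE x in M. Z x \<le> Z' x"
proof -
  have level_set_null: "AE x in M. \<not> (Z' x < r \<and> r \<le> Z x)" for r
  proof (cases "r \<le> 0")
    case False
    from Z_nonpos show ?thesis by eventually_elim (use False in linarith)
  next
    case True
    define A where "A = {x \<in> space M. Z' x < r \<and> r \<le> Z x}"
    have "A = {x \<in> space H. Z' x < r \<and> r \<le> Z x}"
      using H by (simp add: A_def subalgebra_def)
    also have "\<dots> \<in> sets H"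
      using Z Z' by measurable
    finally have A_sets: "A \<in> sets H" .
    have "AE x in M. ereal r \<le> cond_ess_inf M G (\<lambda>y. Z y * indicator A y) x"
      using is_cond_ess_inf_cond_ess_inf[OF M G] True
      by (auto simp: is_cond_ess_inf_def A_def indicator_def intro!: AE_I2)
    moreover have "AE x in M.
      cond_ess_inf M G (\<lambda>y. Z' y * indicator A y) x \<le> ereal (Z' x * indicator A x)"
      using is_cond_ess_inf_cond_ess_inf[OF M G] by (simp add: is_cond_ess_inf_def)
    ultimately have "AE x in M. ereal r \<le> ereal (Z' x * indicator A x)"
      using eq[OF A_sets] by eventually_elim (metis order_trans)
    then show ?thesis
      using AE_space by eventually_elim (auto simp: A_def)
  qed
  have "AE x in M. \<forall>q. \<not> (Z' x < real_of_rat q \<and> real_of_rat q \<le> Z x)"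
    using level_set_null by (simp add: AE_all_countable)
  then show ?thesis
    by eventually_elim (meson not_le of_rat_dense order_less_imp_le)
qed

lemma cond_ess_inf_indicator_unique:
  assumes M: "finite_measure M" and G: "subalgebra M G" and H: "subalgebra M H"
    and Z: "Z \<in> borel_measurable H" "AE x in M. Z x \<le> 0"
    and Z': "Z' \<in> borel_measurable H" "AE x in M. Z' x \<le> 0"
    and Z_eq: "\<forall>A \<in> sets H. AE x in M.
      cond_ess_inf M G (\<lambda>y. Z y * indicator A y) x = cond_ess_inf M G (\<lambda>y. X y * indicator A y) x"
    and Z'_eq: "\<forall>A \<in> sets H. AE x in M.
      cond_ess_inf M G (\<lambda>y. Z' y * indicator A y) x = cond_ess_inf M G (\<lambda>y. X y * indicator A y) x"
  shows "AE x in M. Z' x = Z x"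
proof -
  have eq: "AE x in M.
    cond_ess_inf M G (\<lambda>y. Z y * indicator A y) x = cond_ess_inf M G (\<lambda>y. Z' y * indicator A y) x"
    and eq': "AE x in M.
    cond_ess_inf M G (\<lambda>y. Z' y * indicator A y) x = cond_ess_inf M G (\<lambda>y. Z y * indicator A y) x"
    if "A \<in> sets H" for A
    using Z_eq[rule_format, OF that] Z'_eq[rule_format, OF that] by (eventually_elim, simp)+
  have "AE x in M. Z x \<le> Z' x"
    using M G H Z(1) Z'(1) Z(2) eq by (rule AE_le_if_cond_ess_inf_indicator_eq)
  moreover have "AE x in M. Z' x \<le> Z x"
    using M G H Z'(1) Z(1) Z'(2) eq' by (rule AE_le_if_cond_ess_inf_indicator_eq)
  ultimately show ?thesis
    by eventually_elim simp
qed

lemma cond_ess_inf_indicator_exists: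
  assumes M: "finite_measure M" and G: "subalgebra M G" and H: "subalgebra M H"
    and GH: "sets G \<subseteq> sets H" and X: "AE x in M. a \<le> X x \<and> X x \<le> b"
  shows "\<exists>Z. Z \<in> borel_measurable H \<and> (AE x in M. a \<le> Z x \<and> Z x \<le> b) \<and>
    (\<forall>A \<in> sets H. AE x in M.
      cond_ess_inf M G (\<lambda>y. Z y * indicator A y) x = cond_ess_inf M G (\<lambda>y. X y * indicator A y) x)"
proof -
  obtain Z where Z: "is_cond_ess_inf M H X (\<lambda>x. ereal (Z x))" "AE x in M. a \<le> Z x \<and> Z x \<le> b"
    using ex_bounded_is_cond_ess_inf[OF M H X] by blast
  then have "Z \<in> borel_measurable H"
    by (simp add: is_cond_ess_inf_def borel_measurable_ereal_iff)
  with Z show ?thesis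
    using cond_ess_inf_indicator_tower[OF G H GH Z(1)] by auto
qed

lemma cond_ess_inf_indicator_ex1_Linf_nonpos:
  assumes M: "finite_measure M" and G: "subalgebra M G" and H: "subalgebra M H"
    and GH: "sets G \<subseteq> sets H" and X: "AE x in M. X x \<le> 0" "\<exists>C. AE x in M. \<bar>X x\<bar> \<le> C"
  shows "\<exists>Z. Linf_nonpos M H Z \<and>
      (\<forall>A \<in> sets H. AE x in M.
        cond_ess_inf M G (\<lambda>y. Z y * indicator A y) x = cond_ess_inf M G (\<lambda>y. X y * indicator A y) x) \<and>
      (\<forall>Z'. Linf_nonpos M H Z' \<and>
        (\<forall>A \<in> sets H. AE x in M.
          cond_ess_inf M G (\<lambda>y. Z' y * indicator A y) x = cond_ess_inf M G (\<lambda>y. X y * indicator A y) x)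
        \<longrightarrow> (AE x in M. Z' x = Z x))"
proof -
  obtain C where "AE x in M. \<bar>X x\<bar> \<le> C"
    using X(2) by blast
  then have "AE x in M. - C \<le> X x \<and> X x \<le> 0"
    using X(1) by eventually_elim auto
  from cond_ess_inf_indicator_exists[OF M G H GH this] obtain Z where Z: "Z \<in> borel_measurable H"
    "AE x in M. - C \<le> Z x \<and> Z x \<le> 0" and Z_eq: "\<forall>A \<in> sets H. AE x in M.
      cond_ess_inf M G (\<lambda>y. Z y * indicator A y) x = cond_ess_inf M G (\<lambda>y. X y * indicator A y) x"
    by blast
  have "AE x in M. Z x \<le> 0" "AE x in M. \<bar>Z x\<bar> \<le> C"
    using Z(2) by (eventually_elim, simp)+
  then show ?thesis
    unfolding Linf_nonpos_def
    using Z(1) Z_eq cond_ess_inf_indicator_unique[OF M G H Z(1) _ _ _ Z_eq] by blast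
qed

lemma cond_ess_inf_indicator_ex1_bounded_below:
  assumes M: "finite_measure M" and G: "subalgebra M G" and H: "subalgebra M H"
    and GH: "sets G \<subseteq> sets H" and X: "AE x in M. X x \<le> 0" "\<exists>C. AE x in M. \<bar>X x\<bar> \<le> C"
  shows "\<exists>Z. Z \<in> borel_measurable H \<and> (AE x in M. Z x \<le> 0) \<and>
      (\<exists>c \<in> borel_measurable G. AE x in M. c x \<le> Z x) \<and>
      (\<forall>A \<in> sets H. AE x in M.
        cond_ess_inf M G (\<lambda>y. Z y * indicator A y) x = cond_ess_inf M G (\<lambda>y. X y * indicator A y) x) \<and>
      (\<forall>Z'. Z' \<in> borel_measurable H \<and> (AE x in M. Z' x \<le> 0) \<and>
        (\<exists>c \<in> borel_measurable G. AE x in M. c x \<le> Z' x) \<and>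
        (\<forall>A \<in> sets H. AE x in M.
          cond_ess_inf M G (\<lambda>y. Z' y * indicator A y) x = cond_ess_inf M G (\<lambda>y. X y * indicator A y) x)
        \<longrightarrow> (AE x in M. Z' x = Z x))"
proof -
  obtain C where "AE x in M. \<bar>X x\<bar> \<le> C"
    using X(2) by blast
  then have "AE x in M. - C \<le> X x \<and> X x \<le> 0"
    using X(1) by eventually_elim auto
  from cond_ess_inf_indicator_exists[OF M G H GH this] obtain Z where Z: "Z \<in> borel_measurable H"
    "AE x in M. - C \<le> Z x \<and> Z x \<le> 0" and Z_eq: "\<forall>A \<in> sets H. AE x in M.
      cond_ess_inf M G (\<lambda>y. Z y * indicator A y) x = cond_ess_inf M G (\<lambda>y. X y * indicator A y) x"
    by blast
  have Z_nonpos: "AE x in M. Z x \<le> 0" and Z_lower: "AE x in M. - C \<le> Z x"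
    using Z(2) by (eventually_elim, simp)+
  show ?thesis
    using Z(1) Z_nonpos Z_lower Z_eq cond_ess_inf_indicator_unique[OF M G H Z(1) Z_nonpos _ _ Z_eq]
    by (intro exI[of _ Z] conjI bexI[of _ "\<lambda>_. - C"] allI impI) auto
qed

theorem mainTheorem19:
  fixes M :: "'a measure" and F :: "real \<Rightarrow> 'a measure" and T t :: real
  assumes "prob_space M" and "complete_measure M"
    and "\<And>s. s \<in> {0..T} \<Longrightarrow> complete_subalgebra M (F s)"
    and "\<And>s r. s \<in> {0..T} \<Longrightarrow> r \<in> {0..T} \<Longrightarrow> s \<le> r \<Longrightarrow> sets (F s) \<subseteq> sets (F r)"
    and "t \<in> {0..T}"
  shows
   "(\<forall>X. Linf_nonpos M (F T) X \<longrightarrow>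
      (\<exists>Z. Linf_nonpos M (F t) Z \<and>
          (\<forall>A \<in> sets (F t). AE x in M.
              cond_ess_inf M (F 0) (\<lambda>y. Z y * indicator A y) x
            = cond_ess_inf M (F 0) (\<lambda>y. X y * indicator A y) x) \<and>
          (\<forall>Z'. Linf_nonpos M (F t) Z' \<and>
              (\<forall>A \<in> sets (F t). AE x in M.
                 cond_ess_inf M (F 0) (\<lambda>y. Z' y * indicator A y) x
               = cond_ess_inf M (F 0) (\<lambda>y. X y * indicator A y) x)
            \<longrightarrow> (AE x in M. Z' x = Z x))))
    \<and>
    (\<forall>X. X \<in> borel_measurable (F T) \<and> (\<exists>C. AE x in M. \<bar>X x\<bar> \<le> C) \<and> (AE x in M. X x < 0) \<longrightarrow>
      (\<exists>Z. Z \<in> borel_measurable (F t) \<and> (AE x in M. Z x \<le> 0) \<and>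
          (\<exists>c \<in> borel_measurable (F 0). AE x in M. c x \<le> Z x) \<and>
          (\<forall>A \<in> sets (F t). AE x in M.
              cond_ess_inf M (F 0) (\<lambda>y. Z y * indicator A y) x
            = cond_ess_inf M (F 0) (\<lambda>y. X y * indicator A y) x) \<and>
          (\<forall>Z'. Z' \<in> borel_measurable (F t) \<and> (AE x in M. Z' x \<le> 0) \<and>
              (\<exists>c \<in> borel_measurable (F 0). AE x in M. c x \<le> Z' x) \<and>
              (\<forall>A \<in> sets (F t). AE x in M.
                 cond_ess_inf M (F 0) (\<lambda>y. Z' y * indicator A y) x
               = cond_ess_inf M (F 0) (\<lambda>y. X y * indicator A y) x)
            \<longrightarrow> (AE x in M. Z' x = Z x))))"
proof -
  interpret prob_space M by fact
  have G: "subalgebra M (F 0)" and H: "subalgebra M (F t)" and GH: "sets (F 0) \<subseteq> sets (F t)"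
    using assms(3-5) by (auto simp: complete_subalgebra_def)
  show ?thesis
    by (intro conjI allI impI cond_ess_inf_indicator_ex1_Linf_nonpos[OF finite_measure_axioms G H GH]
        cond_ess_inf_indicator_ex1_bounded_below[OF finite_measure_axioms G H GH])
      (auto simp: Linf_nonpos_def elim: AE_mp)
qed

end
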